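(* In a node-weighted MFQST with Steiner point cost $c>0$, every edge $e$ satisfies $|e|\le\sqrt{2c/f(e)}$, where $f(e)$ is the flow on $e$.
   Context: Let $Z=\{z_1,\dots,z_n\}\subset\mathbb{R}^2$ ($n\ge 1$) be a set of sources and $z_{BS}\in\mathbb{R}^2\setminus Z$ a sink; each source has supply $1$. A flow-dependent quadratic Steiner tree (FQST) consists of a finite set $S\subset\mathbb{R}^2$ of Steiner points and a tree $T$ with vertex set $Z\cup S\cup\{z_{BS}\}$ whose edges are directed towards $z_{BS}$. Every node other than the sink has exactly one out-edge, and the sink has none. Each edge $e$ carries a positive flow $f(e)$ such that: - at each source, the flow on its out-edge minus the total flow on its in-edges equals $1$; - at each Steiner point, the out-flow equals the total in-flow; - the sink receives total flow $n$. The cost is $L(T)=\sum_{e\in E(T)} f(e)|e|^2$. For a fixed $c>0$, a node-weighted MFQST is an FQST minimising $L_c(T)=L(T)+c|S|$ over all FQSTs (any finite $S$, any topology). *)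

theory Defs
  imports "HOL-Analysis.Analysis"
begin

text \<open>Points of the plane are vectors of type real^2.  A flow-dependent quadratic
Steiner tree (FQST) for sources Z and sink zBS is given by a finite set S of
Steiner points, a successor map p (the unique out-edge of a non-sink node v is
the directed edge from v to p v) and a flow map f (f v is the flow on the
out-edge of v).  The edge set is the set of pairs (v, p v) for v a non-sink node.\<close>

definition children :: "(real^2) set \<Rightarrow> real^2 \<Rightarrow> (real^2 \<Rightarrow> real^2) \<Rightarrow> real^2 \<Rightarrow> (real^2) set" where
  "children V zBS p w = {u \<in> V - {zBS}. p u = w}"

definition is_FQST ::
  "(real^2) set \<Rightarrow> real^2 \<Rightarrow> (real^2) set \<Rightarrow> (real^2 \<Rightarrow> real^2) \<Rightarrow> (real^2 \<Rightarrow> real) \<Rightarrow> bool" where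
  "is_FQST Z zBS S p f \<longleftrightarrow>
     (let V = Z \<union> S \<union> {zBS} in
       finite S \<and> S \<inter> (Z \<union> {zBS}) = {} \<and>
       (\<forall>v \<in> V - {zBS}. p v \<in> V) \<and>
       (\<forall>v \<in> V. \<exists>k. (p ^^ k) v = zBS) \<and>
       (\<forall>v \<in> V - {zBS}. f v > 0) \<and>
       (\<forall>z \<in> Z. f z - (\<Sum>u \<in> children V zBS p z. f u) = 1) \<and>
       (\<forall>s \<in> S. f s = (\<Sum>u \<in> children V zBS p s. f u)) \<and>
       (\<Sum>u \<in> children V zBS p zBS. f u) = real (card Z))"

definition FQST_cost ::
  "(real^2) set \<Rightarrow> real^2 \<Rightarrow> (real^2) set \<Rightarrow> (real^2 \<Rightarrow> real^2) \<Rightarrow> (real^2 \<Rightarrow> real) \<Rightarrow> real" where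
  "FQST_cost Z zBS S p f = (\<Sum>v \<in> (Z \<union> S \<union> {zBS}) - {zBS}. f v * (dist v (p v))\<^sup>2)"

definition node_weighted_cost ::
  "real \<Rightarrow> (real^2) set \<Rightarrow> real^2 \<Rightarrow> (real^2) set \<Rightarrow> (real^2 \<Rightarrow> real^2) \<Rightarrow> (real^2 \<Rightarrow> real) \<Rightarrow> real" where
  "node_weighted_cost c Z zBS S p f = FQST_cost Z zBS S p f + c * real (card S)"

definition is_node_weighted_MFQST ::
  "real \<Rightarrow> (real^2) set \<Rightarrow> real^2 \<Rightarrow> (real^2) set \<Rightarrow> (real^2 \<Rightarrow> real^2) \<Rightarrow> (real^2 \<Rightarrow> real) \<Rightarrow> bool" where
  "is_node_weighted_MFQST c Z zBS S p f \<longleftrightarrow>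
     is_FQST Z zBS S p f \<and>
     (\<forall>S' p' f'. is_FQST Z zBS S' p' f' \<longrightarrow>
        node_weighted_cost c Z zBS S p f \<le> node_weighted_cost c Z zBS S' p' f')"

end

theory Submission
  imports Defs
begin

(* Let (v, w) be an edge of a minimal tree, w = p v, carrying flow f v.
   Subdividing this edge by a fresh Steiner point s (not yet a node) yields again an
   FQST: v now points to s, s points to w and carries the flow f v, all other data
   are unchanged.  Its node-weighted cost exceeds the original one by
   f v (|v s|^2 + |s w|^2 - |v w|^2) + c, so minimality gives
   f v |v w|^2 <= f v (|v s|^2 + |s w|^2) + c  for every point s off the tree.
   By the median identity |v s|^2 + |s w|^2 = |v w|^2/2 + 2 |s m|^2 (m the midpoint),
   and since points off a finite set come arbitrarily close to m, we get
   f v |v w|^2 / 2 <= c, i.e. |v w| <= sqrt (2 c / f v). *)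

lemma median_identity:
  fixes a b x :: "'a::real_inner"
  shows "(dist a x)\<^sup>2 + (dist x b)\<^sup>2 = (dist a b)\<^sup>2 / 2 + 2 * (dist x (midpoint a b))\<^sup>2"
  unfolding dist_norm power2_norm_eq_inner midpoint_def
  by (simp add: inner_add inner_diff inner_commute field_simps)

text \<open>This is where the plane's continuum of points is used.\<close>

lemma short_edge_if_subdivision_not_cheaper:
  fixes v w :: "'a::{real_inner, perfect_space}" and V :: "'a set" and \<phi> c :: real
  assumes "finite V" and "\<phi> > 0" and "c \<ge> 0"
    and no_gain: "\<And>s. s \<notin> V \<Longrightarrow> \<phi> * (dist v w)\<^sup>2 \<le> \<phi> * ((dist v s)\<^sup>2 + (dist s w)\<^sup>2) + c"
  shows "dist v w \<le> sqrt (2 * c / \<phi>)"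
proof -
  define m where "m = midpoint v w"
  have "m islimpt (UNIV - V)"
    using islimpt_Un_finite[OF \<open>finite V\<close>, of m "UNIV - V"] by simp
  then have near_m: "\<exists>s. s \<notin> V \<and> dist s m < r" if "r > 0" for r
    using that by (auto simp: islimpt_approachable)
  have "\<phi> * (dist v w)\<^sup>2 / 2 \<le> c + \<epsilon>" if "\<epsilon> > 0" for \<epsilon>
  proof -
    obtain s where "s \<notin> V" and s_near: "dist s m < sqrt (\<epsilon> / (2 * \<phi>))"
      using near_m[of "sqrt (\<epsilon> / (2 * \<phi>))"] \<open>\<epsilon> > 0\<close> \<open>\<phi> > 0\<close> by auto
    have "(dist s m)\<^sup>2 < (sqrt (\<epsilon> / (2 * \<phi>)))\<^sup>2"
      using s_near by (simp add: power_strict_mono)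
    then have "(dist s m)\<^sup>2 < \<epsilon> / (2 * \<phi>)"
      using \<open>\<epsilon> > 0\<close> \<open>\<phi> > 0\<close> by simp
    then have "\<phi> * (2 * (dist s m)\<^sup>2) < \<epsilon>"
      using \<open>\<phi> > 0\<close> by (simp add: field_simps)
    moreover have "\<phi> * (dist v w)\<^sup>2 \<le> \<phi> * ((dist v w)\<^sup>2 / 2 + 2 * (dist s m)\<^sup>2) + c"
      using no_gain[OF \<open>s \<notin> V\<close>] median_identity[of v s w] by (simp add: m_def)
    ultimately show ?thesis by (simp add: algebra_simps)
  qed
  then have "\<phi> * (dist v w)\<^sup>2 / 2 \<le> c"
    by (rule field_le_epsilon)
  then have "(dist v w)\<^sup>2 \<le> 2 * c / \<phi>"
    using \<open>\<phi> > 0\<close> by (simp add: field_simps)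
  then show ?thesis
    by (rule real_le_rsqrt)
qed

text \<open>Every node that reached the sink still does: each step
  of the old path is simulated by one new step, or by two (via s) when leaving v.\<close>

lemma reaches_sink_after_subdivision:
  assumes closed: "\<forall>u \<in> V - {zBS}. p u \<in> V"
    and "s \<notin> V" and "v \<in> V"
    and "u \<in> V" and "(p ^^ k) u = zBS"
  shows "\<exists>k'. (p(v := s, s := p v) ^^ k') u = zBS"
  using assms(4,5)
proof (induction k arbitrary: u)
  case 0
  then show ?case by (metis funpow_0)
next
  case (Suc k)
  let ?q = "p(v := s, s := p v)"
  show ?case
  proof (cases "u = zBS")
    case True
    then show ?thesis by (metis funpow_0)
  next
    case False
    have "p u \<in> V" and "(p ^^ k) (p u) = zBS"
      using closed Suc.prems False by (auto simp: funpow_Suc_right simp del: funpow.simps)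
    then obtain k' where k': "(?q ^^ k') (p u) = zBS"
      using Suc.IH by blast
    have "u \<noteq> s" and "s \<noteq> v"
      using Suc.prems \<open>s \<notin> V\<close> \<open>v \<in> V\<close> by auto
    then have "(?q ^^ (if u = v then 2 else 1)) u = p u"
      by (simp add: numeral_2_eq_2)
    then have "(?q ^^ (k' + (if u = v then 2 else 1))) u = zBS"
      by (simp add: funpow_add k')
    then show ?thesis by blast
  qed
qed

lemma children_after_subdivision:
  assumes "\<forall>u \<in> V - {zBS}. p u \<in> V"
    and "s \<notin> V" and "v \<in> V" and "v \<noteq> zBS" and "s \<noteq> zBS"
  shows "children (insert s V) zBS (p(v := s, s := p v)) s = {v}"
    and "x \<noteq> s \<Longrightarrow> children (insert s V) zBS (p(v := s, s := p v)) x
           = (\<lambda>u. if u = v then s else u) ` children V zBS p x"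
  using assms by (auto simp: children_def image_iff)

lemma inflow_after_subdivision:
  assumes "\<forall>u \<in> V - {zBS}. p u \<in> V"
    and "s \<notin> V" and "v \<in> V" and "v \<noteq> zBS" and "s \<noteq> zBS" and "x \<noteq> s"
  shows "(\<Sum>u \<in> children (insert s V) zBS (p(v := s, s := p v)) x. (f(s := f v)) u)
         = (\<Sum>u \<in> children V zBS p x. f u)"
proof -
  let ?g = "\<lambda>u. if u = v then s else u"
  have "inj_on ?g (children V zBS p x)"
    using \<open>s \<notin> V\<close> by (auto simp: inj_on_def children_def)
  moreover have "(f(s := f v)) (?g u) = f u" if "u \<in> children V zBS p x" for u
    using that \<open>s \<notin> V\<close> by (auto simp: children_def)
  ultimately show ?thesis
    using children_after_subdivision(2)[OF assms] by (simp add: sum.reindex_cong)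
qed

lemma subdivision_is_FQST:
  assumes tree: "is_FQST Z zBS S p f"
    and v: "v \<in> (Z \<union> S \<union> {zBS}) - {zBS}" and s: "s \<notin> Z \<union> S \<union> {zBS}"
  shows "is_FQST Z zBS (insert s S) (p(v := s, s := p v)) (f(s := f v))"
proof -
  define V where "V = Z \<union> S \<union> {zBS}"
  let ?q = "p(v := s, s := p v)" and ?f = "f(s := f v)"
  have finS: "finite S" and disj: "S \<inter> (Z \<union> {zBS}) = {}"
    and closed: "\<forall>u \<in> V - {zBS}. p u \<in> V"
    and reach: "\<forall>u \<in> V. \<exists>k. (p ^^ k) u = zBS" and fpos: "\<forall>u \<in> V - {zBS}. f u > 0"
    and fZ: "\<forall>z \<in> Z. f z - (\<Sum>u \<in> children V zBS p z. f u) = 1"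
    and fS: "\<forall>x \<in> S. f x = (\<Sum>u \<in> children V zBS p x. f u)"
    and fB: "(\<Sum>u \<in> children V zBS p zBS. f u) = real (card Z)"
    using tree unfolding is_FQST_def Let_def V_def by auto
  have "s \<notin> V" "v \<in> V" "v \<noteq> zBS" "s \<noteq> zBS" "s \<noteq> v" "p v \<in> V"
    using v s closed by (auto simp: V_def)
  note inflow = inflow_after_subdivision[OF closed \<open>s \<notin> V\<close> \<open>v \<in> V\<close> \<open>v \<noteq> zBS\<close> \<open>s \<noteq> zBS\<close>, where f = f]
  have V': "Z \<union> insert s S \<union> {zBS} = insert s V"
    by (auto simp: V_def)
  have "\<forall>u \<in> insert s V - {zBS}. ?q u \<in> insert s V"
    using closed \<open>p v \<in> V\<close> by auto
  moreover have "\<forall>u \<in> insert s V. \<exists>k. (?q ^^ k) u = zBS"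
  proof
    fix u assume "u \<in> insert s V"
    have old: "\<exists>k. (?q ^^ k) x = zBS" if "x \<in> V" for x
      using reach reaches_sink_after_subdivision[OF closed \<open>s \<notin> V\<close> \<open>v \<in> V\<close> that] that by blast
    show "\<exists>k. (?q ^^ k) u = zBS"
    proof (cases "u = s")
      case True
      obtain k where "(?q ^^ k) (p v) = zBS"
        using old[OF \<open>p v \<in> V\<close>] by blast
      then have "(?q ^^ Suc k) u = zBS"
        using True by (simp add: funpow_Suc_right del: funpow.simps)
      then show ?thesis by blast
    next
      case False
      then show ?thesis using \<open>u \<in> insert s V\<close> old by blast
    qed
  qed
  moreover have "\<forall>u \<in> insert s V - {zBS}. ?f u > 0"
    using fpos \<open>v \<in> V\<close> \<open>v \<noteq> zBS\<close> by auto
  moreover have "\<forall>z \<in> Z. ?f z - (\<Sum>u \<in> children (insert s V) zBS ?q z. ?f u) = 1"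
    using fZ inflow s by auto
  moreover have "\<forall>x \<in> insert s S. ?f x = (\<Sum>u \<in> children (insert s V) zBS ?q x. ?f u)"
    using fS inflow s \<open>s \<noteq> v\<close>
      children_after_subdivision(1)[OF closed \<open>s \<notin> V\<close> \<open>v \<in> V\<close> \<open>v \<noteq> zBS\<close> \<open>s \<noteq> zBS\<close>]
    by auto
  moreover have "(\<Sum>u \<in> children (insert s V) zBS ?q zBS. ?f u) = real (card Z)"
    using fB inflow \<open>s \<noteq> zBS\<close> by auto
  ultimately show ?thesis
    using finS disj s unfolding is_FQST_def Let_def V' by (auto simp: V_def)
qed

lemma subdivision_cost:
  assumes "finite Z" and "finite S"
    and v: "v \<in> (Z \<union> S \<union> {zBS}) - {zBS}" and s: "s \<notin> Z \<union> S \<union> {zBS}"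
  shows "node_weighted_cost c Z zBS (insert s S) (p(v := s, s := p v)) (f(s := f v))
         = node_weighted_cost c Z zBS S p f
           + f v * ((dist v s)\<^sup>2 + (dist s (p v))\<^sup>2 - (dist v (p v))\<^sup>2) + c"
proof -
  define E where "E = Z \<union> S \<union> {zBS} - {zBS}"
  let ?q = "p(v := s, s := p v)" and ?f = "f(s := f v)"
  let ?term = "\<lambda>q g u. g u * (dist u (q u))\<^sup>2"
  have "finite E" and "v \<in> E" and "s \<notin> E" and "s \<noteq> v"
    using assms by (auto simp: E_def)
  have E': "Z \<union> insert s S \<union> {zBS} - {zBS} = insert s E"
    using s by (auto simp: E_def)
  have rest: "(\<Sum>u \<in> E - {v}. ?term ?q ?f u) = (\<Sum>u \<in> E - {v}. ?term p f u)"
    using \<open>s \<notin> E\<close> by (intro sum.cong) auto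
  have "FQST_cost Z zBS (insert s S) ?q ?f = ?term ?q ?f s + (\<Sum>u \<in> E. ?term ?q ?f u)"
    unfolding FQST_cost_def E' by (rule sum.insert[OF \<open>finite E\<close> \<open>s \<notin> E\<close>])
  also have "\<dots> = ?term ?q ?f s + ?term ?q ?f v + (\<Sum>u \<in> E - {v}. ?term ?q ?f u)"
    using sum.remove[OF \<open>finite E\<close> \<open>v \<in> E\<close>, of "?term ?q ?f"] by simp
  also have "\<dots> = f v * (dist s (p v))\<^sup>2 + f v * (dist v s)\<^sup>2 + (\<Sum>u \<in> E - {v}. ?term p f u)"
    using \<open>s \<noteq> v\<close> rest by simp
  finally have new: "FQST_cost Z zBS (insert s S) ?q ?f
      = f v * (dist s (p v))\<^sup>2 + f v * (dist v s)\<^sup>2 + (\<Sum>u \<in> E - {v}. ?term p f u)" .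
  have old: "FQST_cost Z zBS S p f = f v * (dist v (p v))\<^sup>2 + (\<Sum>u \<in> E - {v}. ?term p f u)"
    unfolding FQST_cost_def E_def[symmetric] using sum.remove[OF \<open>finite E\<close> \<open>v \<in> E\<close>] by simp
  have "card (insert s S) = card S + 1"
    using \<open>finite S\<close> s by simp
  then show ?thesis
    unfolding node_weighted_cost_def new old by (simp add: algebra_simps)
qed

theorem mainTheorem14:
  fixes Z S :: "(real^2) set" and zBS :: "real^2" and p :: "real^2 \<Rightarrow> real^2"
    and f :: "real^2 \<Rightarrow> real" and c :: real
  assumes "finite Z" and "Z \<noteq> {}" and "zBS \<notin> Z" and "c > 0"
    and "is_node_weighted_MFQST c Z zBS S p f"
    and "v \<in> (Z \<union> S \<union> {zBS}) - {zBS}"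
  shows "dist v (p v) \<le> sqrt (2 * c / f v)"
proof -
  have tree: "is_FQST Z zBS S p f"
    and optimal: "\<And>S' p' f'. is_FQST Z zBS S' p' f' \<Longrightarrow>
                    node_weighted_cost c Z zBS S p f \<le> node_weighted_cost c Z zBS S' p' f'"
    using assms(5) unfolding is_node_weighted_MFQST_def by auto
  have "finite S" and "f v > 0"
    using tree assms(6) unfolding is_FQST_def Let_def by auto
  have "f v * (dist v (p v))\<^sup>2 \<le> f v * ((dist v s)\<^sup>2 + (dist s (p v))\<^sup>2) + c"
    if "s \<notin> Z \<union> S \<union> {zBS}" for s
    using optimal[OF subdivision_is_FQST[OF tree assms(6) that]]
      subdivision_cost[OF \<open>finite Z\<close> \<open>finite S\<close> assms(6) that, of c p f]
    by (simp add: algebra_simps)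
  then show ?thesis
    using short_edge_if_subdivision_not_cheaper[of "Z \<union> S \<union> {zBS}" "f v" c v "p v"]
      \<open>finite Z\<close> \<open>finite S\<close> \<open>f v > 0\<close> \<open>c > 0\<close> by auto
qed

end
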